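(* For $n\in\mathbb N$, let $\sigma$ be the measure on $L_n$ given by $\sigma(j)=\sin\big(\frac{j\pi}{n+1}\big)$, $1\le j\le n$. Then $C^0_\sigma=1+2\cos\big(\frac{\pi}{n+1}\big)$.
   Context: $L_n$ is the path graph with vertices $\{1,\dots,n\}$ and edges $\{j,j+1\}$, with distance $|i-j|$. For a weight function $\mu:\{1,\dots,n\}\to(0,\infty)$, $\mu(A)=\sum_{v\in A}\mu(v)$, $B(x,r)=\{y:|x-y|\le r\}$ and $C^0_\mu=\max_{1\le x\le n}\mu(B(x,1))/\mu(x)$. *)

theory Defs
  imports "HOL-Analysis.Analysis"
begin

text \<open>The path graph L_n: vertex set {1..n}, graph distance |i - j|.\<close>

definition path_ball :: "nat \<Rightarrow> nat \<Rightarrow> nat \<Rightarrow> nat set" where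
  "path_ball n x r = {y \<in> {1..n}. \<bar>int x - int y\<bar> \<le> int r}"

definition meas :: "(nat \<Rightarrow> real) \<Rightarrow> nat set \<Rightarrow> real" where
  "meas \<mu> A = (\<Sum>v\<in>A. \<mu> v)"

definition C0 :: "nat \<Rightarrow> (nat \<Rightarrow> real) \<Rightarrow> real" where
  "C0 n \<mu> = Max ((\<lambda>x. meas \<mu> (path_ball n x 1) / \<mu> x) ` {1..n})"

end

theory Submission
  imports Defs
begin

text \<open>With \<open>a = \<pi>/(n+1)\<close>, the weight \<open>\<sigma> j = sin (j a)\<close> is a Dirichlet eigenvector of the
path: \<open>\<sigma>(j-1) + \<sigma>(j+1) = 2 cos a \<sigma> j\<close>, and the boundary values \<open>\<sigma> 0 = \<sigma>(n+1) = 0\<close> make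
the truncated balls at the two endpoints behave like interior ones. Hence the ratio
\<open>\<sigma>(B(x,1)) / \<sigma> x\<close> equals \<open>1 + 2 cos a\<close> at every vertex, and so does its maximum.\<close>

lemma meas_path_ball_1:
  assumes "\<mu> 0 = 0" and "\<mu> (n + 1) = 0" and "x \<in> {1..n}"
  shows "meas \<mu> (path_ball n x 1) = \<mu> (x - 1) + \<mu> x + \<mu> (x + 1)"
proof -
  have ball_sub: "path_ball n x 1 \<subseteq> {x - 1, x, x + 1}"
    unfolding path_ball_def by auto
  have outside_zero: "\<mu> i = 0" if "i \<in> {x - 1, x, x + 1} - path_ball n x 1" for i
  proof -
    from that \<open>x \<in> {1..n}\<close> have "i = 0 \<or> i = n + 1"
      unfolding path_ball_def by auto
    then show ?thesis using assms(1,2) by auto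
  qed
  have "meas \<mu> (path_ball n x 1) = sum \<mu> {x - 1, x, x + 1}"
    unfolding meas_def using ball_sub outside_zero by (intro sum.mono_neutral_left) auto
  also have "\<dots> = \<mu> (x - 1) + \<mu> x + \<mu> (x + 1)"
    using \<open>x \<in> {1..n}\<close> by (cases x) (auto simp: algebra_simps)
  finally show ?thesis .
qed

lemma C0_const_ratio:
  assumes "n \<ge> 1" and "\<And>x. x \<in> {1..n} \<Longrightarrow> meas \<mu> (path_ball n x 1) / \<mu> x = c"
  shows "C0 n \<mu> = c"
proof -
  have "(\<lambda>x. meas \<mu> (path_ball n x 1) / \<mu> x) ` {1..n} = {c}"
    using assms by (auto intro!: image_eqI[where x = 1])
  then show ?thesis by (simp add: C0_def)
qed

lemma C0_eigenvector:
  assumes "n \<ge> 1" and "\<mu> 0 = 0" and "\<mu> (n + 1) = 0"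
    and pos: "\<And>x. x \<in> {1..n} \<Longrightarrow> \<mu> x > 0"
    and eigen: "\<And>x. x \<in> {1..n} \<Longrightarrow> \<mu> (x - 1) + \<mu> (x + 1) = c * \<mu> x"
  shows "C0 n \<mu> = 1 + c"
proof (rule C0_const_ratio[OF \<open>n \<ge> 1\<close>])
  fix x assume x: "x \<in> {1..n}"
  have "meas \<mu> (path_ball n x 1) = (1 + c) * \<mu> x"
    using meas_path_ball_1[OF assms(2,3) x] eigen[OF x] by (simp add: algebra_simps)
  then show "meas \<mu> (path_ball n x 1) / \<mu> x = 1 + c"
    using pos[OF x] by simp
qed

lemma sin_neighbours_sum: "sin (t - a) + sin (t + a) = 2 * cos a * sin (t :: real)"
  by (simp add: sin_add sin_diff)

lemma sin_multiple_pos: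
  assumes "j \<in> {1..n}"
  shows "sin (real j * pi / real (n + 1)) > 0"
proof (rule sin_gt_zero)
  show "0 < real j * pi / real (n + 1)" using assms by simp
  have "real j * pi < real (n + 1) * pi" using assms by simp
  then show "real j * pi / real (n + 1) < pi" by (simp add: divide_less_eq)
qed

theorem lemma3p3:
  fixes n :: nat
  assumes "n \<ge> 1"
  shows "C0 n (\<lambda>j. sin (real j * pi / real (n + 1))) = 1 + 2 * cos (pi / real (n + 1))"
proof (rule C0_eigenvector[OF assms])
  define a where "a = pi / real (n + 1)"
  have angle: "real j * pi / real (n + 1) = real j * a" for j
    by (simp add: a_def)
  fix x assume "x \<in> {1..n}"
  then have "real (x - 1) * a = real x * a - a" and "real (x + 1) * a = real x * a + a"
    by (auto simp: of_nat_diff algebra_simps)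
  then show "sin (real (x - 1) * pi / real (n + 1)) + sin (real (x + 1) * pi / real (n + 1))
      = 2 * cos (pi / real (n + 1)) * sin (real x * pi / real (n + 1))"
    unfolding angle a_def[symmetric] by (simp add: sin_neighbours_sum)
qed (simp, simp, rule sin_multiple_pos)

end
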